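(* Let $\mathcal G$ be a synchronous game. Then $\mathcal I(\mathcal G)$ is a hereditary subspace of $\mathbb C[\mathbb F(n,m)]$ if and only if $\mathcal A(\mathcal G)^+\cap(-\mathcal A(\mathcal G)^+)=(0)$.
   Context: A synchronous game $\mathcal G=(I,O,\lambda)$: finite sets $I,O$ with $|I|=n$, $|O|=m$ ($O=\{0,\dots,m-1\}$), $\lambda:I\times I\times O\times O\to\{0,1\}$ with $\lambda(v,v,a,b)=1$ iff $a=b$. Let $\mathbb F(n,m)$ be the free product of $n$ copies of the cyclic group of order $m$ with generators $u_v$, $\mathbb C[\mathbb F(n,m)]$ its group $*$-algebra, $\omega=e^{2\pi i/m}$, $e_{v,a}=\frac1m\sum_{k=0}^{m-1}(\omega^{-a}u_v)^k$. $\mathcal I(\mathcal G)$ is the two-sided $*$-ideal generated by $\{e_{v,a}e_{w,b}:\lambda(v,w,a,b)=0\}$ and $\mathcal A(\mathcal G)=\mathbb C[\mathbb F(n,m)]/\mathcal I(\mathcal G)$. Let $\mathcal P$ be the cone of finite sums of elements $f^*f$, $f\in\mathbb C[\mathbb F(n,m)]$; for self-adjoint $h,k$ write $h\le k$ if $k-h\in\mathcal P$. A self-adjoint subspace $V$ is hereditary if $0\le f\le h$ and $h\in V$ imply $f\in V$. $\mathcal A(\mathcal G)^+=\{p+\mathcal I(\mathcal G):p\in\mathcal P\}$. *)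

theory Defs
  imports Complex_Main
begin

text \<open>A letter (v,k) stands for u_v^k. A reduced word over I has letters with
v in I and 0 < k < m, and no two consecutive letters with the same generator.\<close>

type_synonym 'i word = "('i \<times> nat) list"

definition reduced_words :: "'i set \<Rightarrow> nat \<Rightarrow> 'i word set" where
  "reduced_words I m = {w. (\<forall>(v,k)\<in>set w. v \<in> I \<and> 0 < k \<and> k < m)
                          \<and> successively (\<lambda>x y. fst x \<noteq> fst y) w}"

definition cons_letter :: "nat \<Rightarrow> 'i \<times> nat \<Rightarrow> 'i word \<Rightarrow> 'i word" where
  "cons_letter m l w =
     (let v = fst l; k0 = snd l mod m in
      if k0 = 0 then w else
      (case w of
         [] \<Rightarrow> [(v,k0)]
       | (x # w') \<Rightarrow>
           (if fst x = v then
              (let s = (k0 + snd x) mod m in if s = 0 then w' else (v,s) # w')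
            else (v,k0) # w)))"

definition gmult :: "nat \<Rightarrow> 'i word \<Rightarrow> 'i word \<Rightarrow> 'i word" where
  "gmult m a b = foldr (cons_letter m) a b"

definition ginv :: "nat \<Rightarrow> 'i word \<Rightarrow> 'i word" where
  "ginv m w = rev (map (\<lambda>(v,k). (v, m - k)) w)"

type_synonym 'i ga = "'i word \<Rightarrow> complex"

definition ga_carrier :: "'i set \<Rightarrow> nat \<Rightarrow> 'i ga set" where
  "ga_carrier I m = {f. finite {w. f w \<noteq> 0} \<and> (\<forall>w. f w \<noteq> 0 \<longrightarrow> w \<in> reduced_words I m)}"

definition ga_zero :: "'i ga" where
  "ga_zero = (\<lambda>w. 0)"

definition ga_add :: "'i ga \<Rightarrow> 'i ga \<Rightarrow> 'i ga" where
  "ga_add f g = (\<lambda>w. f w + g w)"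

definition ga_smult :: "complex \<Rightarrow> 'i ga \<Rightarrow> 'i ga" where
  "ga_smult c f = (\<lambda>w. c * f w)"

definition ga_delta :: "'i word \<Rightarrow> 'i ga" where
  "ga_delta x = (\<lambda>w. if w = x then 1 else 0)"

definition ga_mult :: "nat \<Rightarrow> 'i ga \<Rightarrow> 'i ga \<Rightarrow> 'i ga" where
  "ga_mult m f g = (\<lambda>w. \<Sum>(a,b)\<in>{(a,b). f a \<noteq> 0 \<and> g b \<noteq> 0 \<and> gmult m a b = w}. f a * g b)"

definition ga_star :: "nat \<Rightarrow> 'i ga \<Rightarrow> 'i ga" where
  "ga_star m f = (\<lambda>w. cnj (f (ginv m w)))"

definition ga_one :: "'i ga" where
  "ga_one = ga_delta []"

fun ga_pow :: "nat \<Rightarrow> 'i ga \<Rightarrow> nat \<Rightarrow> 'i ga" where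
  "ga_pow m f 0 = ga_one"
| "ga_pow m f (Suc k) = ga_mult m f (ga_pow m f k)"

definition ga_sum :: "'b set \<Rightarrow> ('b \<Rightarrow> 'i ga) \<Rightarrow> 'i ga" where
  "ga_sum A F = (\<lambda>w. \<Sum>x\<in>A. F x w)"

definition gen_u :: "nat \<Rightarrow> 'i \<Rightarrow> 'i ga" where
  "gen_u m v = ga_delta (cons_letter m (v,1) [])"

definition omega :: "nat \<Rightarrow> complex" where
  "omega m = cis (2 * pi / real m)"

definition proj_e :: "nat \<Rightarrow> 'i \<Rightarrow> nat \<Rightarrow> 'i ga" where
  "proj_e m v a = ga_smult (1 / of_nat m)
      (ga_sum {..<m} (\<lambda>k. ga_pow m (ga_smult (inverse (omega m) ^ a) (gen_u m v)) k))"

inductive_set ga_ideal :: "'i set \<Rightarrow> nat \<Rightarrow> 'i ga set \<Rightarrow> 'i ga set"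
  for I m S where
  gen: "x \<in> S \<Longrightarrow> x \<in> ga_ideal I m S"
| zero: "ga_zero \<in> ga_ideal I m S"
| add: "x \<in> ga_ideal I m S \<Longrightarrow> y \<in> ga_ideal I m S \<Longrightarrow> ga_add x y \<in> ga_ideal I m S"
| smult: "x \<in> ga_ideal I m S \<Longrightarrow> ga_smult c x \<in> ga_ideal I m S"
| lmult: "a \<in> ga_carrier I m \<Longrightarrow> x \<in> ga_ideal I m S \<Longrightarrow> ga_mult m a x \<in> ga_ideal I m S"
| rmult: "a \<in> ga_carrier I m \<Longrightarrow> x \<in> ga_ideal I m S \<Longrightarrow> ga_mult m x a \<in> ga_ideal I m S"
| star: "x \<in> ga_ideal I m S \<Longrightarrow> ga_star m x \<in> ga_ideal I m S"

inductive_set ga_cone :: "'i set \<Rightarrow> nat \<Rightarrow> 'i ga set"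
  for I m where
  zero: "ga_zero \<in> ga_cone I m"
| step: "f \<in> ga_carrier I m \<Longrightarrow> p \<in> ga_cone I m \<Longrightarrow>
           ga_add (ga_mult m (ga_star m f) f) p \<in> ga_cone I m"

definition self_adjoint :: "'i set \<Rightarrow> nat \<Rightarrow> 'i ga \<Rightarrow> bool" where
  "self_adjoint I m h \<longleftrightarrow> h \<in> ga_carrier I m \<and> ga_star m h = h"

definition ga_le :: "'i set \<Rightarrow> nat \<Rightarrow> 'i ga \<Rightarrow> 'i ga \<Rightarrow> bool" where
  "ga_le I m h k \<longleftrightarrow> ga_add k (ga_smult (-1) h) \<in> ga_cone I m"

definition hereditary_subspace :: "'i set \<Rightarrow> nat \<Rightarrow> 'i ga set \<Rightarrow> bool" where
  "hereditary_subspace I m V \<longleftrightarrow>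
     V \<subseteq> ga_carrier I m \<and> ga_zero \<in> V
     \<and> (\<forall>x\<in>V. \<forall>y\<in>V. ga_add x y \<in> V) \<and> (\<forall>c. \<forall>x\<in>V. ga_smult c x \<in> V)
     \<and> (\<forall>x\<in>V. ga_star m x \<in> V)
     \<and> (\<forall>f h. self_adjoint I m f \<and> self_adjoint I m h \<and> ga_le I m ga_zero f \<and> ga_le I m f h
              \<and> h \<in> V \<longrightarrow> f \<in> V)"

definition game_ideal :: "'i set \<Rightarrow> nat \<Rightarrow> ('i \<Rightarrow> 'i \<Rightarrow> nat \<Rightarrow> nat \<Rightarrow> bool) \<Rightarrow> 'i ga set" where
  "game_ideal I m lam = ga_ideal I m
     {ga_mult m (proj_e m v a) (proj_e m w b) | v w a b.
        v \<in> I \<and> w \<in> I \<and> a < m \<and> b < m \<and> \<not> lam v w a b}"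

text \<open>Cosets x + J in the quotient algebra, and the positive cone A(G)^+.\<close>
definition ga_coset :: "'i ga set \<Rightarrow> 'i ga \<Rightarrow> 'i ga set" where
  "ga_coset J x = {ga_add x y | y. y \<in> J}"

definition quot_pos :: "'i set \<Rightarrow> nat \<Rightarrow> 'i ga set \<Rightarrow> 'i ga set set" where
  "quot_pos I m J = {ga_coset J p | p. p \<in> ga_cone I m}"

definition quot_neg :: "'i ga set set \<Rightarrow> 'i ga set set" where
  "quot_neg X = {(\<lambda>z. ga_smult (-1) z) ` C | C. C \<in> X}"

end

theory Submission
  imports Defs
begin

text \<open>Both conditions say the same thing about a *-closed subspace J of the group algebra:
a coset p + J (p in the cone P) lies in A^+ \<inter> -A^+ exactly when p + q \<in> J for some q in P,
i.e. when 0 \<le> p \<le> p + q with p + q \<in> J. Heredity forces such p into J, i.e. the coset is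
zero; conversely, if only the zero coset is in A^+ \<inter> -A^+, then 0 \<le> f \<le> h \<in> J yields
the pair p = f, q = h - f and hence f \<in> J. The only algebra needed is that every element
of P is self-adjoint, which rests on (ab)^* = b^* a^* and thus on the group laws of the
reduced-word model of F(n,m).\<close>

lemma reduced_words_Nil [simp]: "[] \<in> reduced_words I m"
  by (simp add: reduced_words_def)

lemma reduced_words_Cons:
  "x # w \<in> reduced_words I m \<longleftrightarrow>
     fst x \<in> I \<and> 0 < snd x \<and> snd x < m \<and> w \<in> reduced_words I m \<and> (w = [] \<or> fst x \<noteq> fst (hd w))"
  by (cases x) (auto simp: reduced_words_def successively_Cons)

lemma cons_letter_reduced:
  assumes "w \<in> reduced_words I m" "v \<in> I" "0 < m"
  shows "cons_letter m (v, k) w \<in> reduced_words I m"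
  using assms by (cases w) (auto simp: cons_letter_def Let_def reduced_words_Cons)

lemma cons_letter_mod: "cons_letter m (v, k mod m) w = cons_letter m (v, k) w"
  by (simp add: cons_letter_def)

lemma cons_letter_mod_eq_0: "k mod m = 0 \<Longrightarrow> cons_letter m (v, k) w = w"
  by (simp add: cons_letter_def)

lemma gmult_Nil: "gmult m [] b = b"
  by (simp add: gmult_def)

lemma gmult_Cons: "gmult m (x # a) b = cons_letter m x (gmult m a b)"
  by (simp add: gmult_def)

lemma gmult_append: "gmult m (a @ b) c = gmult m a (gmult m b c)"
  by (simp add: gmult_def)

lemma gmult_reduced:
  "a \<in> reduced_words I m \<Longrightarrow> b \<in> reduced_words I m \<Longrightarrow> gmult m a b \<in> reduced_words I m"
proof (induction a)
  case (Cons x a)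
  then show ?case
    using cons_letter_reduced[of "gmult m a b" I m "fst x" "snd x"]
    by (auto simp: gmult_Cons reduced_words_Cons)
qed (simp add: gmult_Nil)

lemma mod_less_double: "(x::nat) < 2 * m \<Longrightarrow> x mod m = (if x < m then x else x - m)"
  by (cases "x < m") (auto simp: le_mod_geq)

lemma cons_letter_cons_letter_less:
  assumes "0 < m" "w \<in> reduced_words I m" "k < m" "k' < m"
  shows "cons_letter m (v, k) (cons_letter m (v, k') w) = cons_letter m (v, (k + k') mod m) w"
proof (cases w)
  case Nil
  then show ?thesis using assms by (auto simp: cons_letter_def Let_def mod_less_double)
next
  case (Cons x w')
  obtain u j where x: "x = (u, j)" by force
  have "0 < j" "j < m" "w' = [] \<or> u \<noteq> fst (hd w')"
    using assms(2) Cons x by (auto simp: reduced_words_Cons)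
  then show ?thesis using assms Cons x
    by (cases "u = v"; cases w') (auto simp: cons_letter_def Let_def mod_less_double)
qed

lemma cons_letter_cons_letter:
  assumes "0 < m" "w \<in> reduced_words I m"
  shows "cons_letter m (v, k) (cons_letter m (v, k') w) = cons_letter m (v, k + k') w"
proof -
  have "cons_letter m (v, k) (cons_letter m (v, k') w) =
        cons_letter m (v, k mod m) (cons_letter m (v, k' mod m) w)"
    by (simp add: cons_letter_mod)
  also have "\<dots> = cons_letter m (v, (k mod m + k' mod m) mod m) w"
    using cons_letter_cons_letter_less[OF assms] assms(1) by simp
  also have "\<dots> = cons_letter m (v, k + k') w"
    by (simp add: cons_letter_mod mod_add_eq)
  finally show ?thesis .
qed

lemma gmult_cons_letter:
  assumes u: "u \<in> reduced_words I m" and w: "w \<in> reduced_words I m"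
    and x: "fst x \<in> I" "0 < snd x" "snd x < m"
  shows "gmult m (cons_letter m x u) w = cons_letter m x (gmult m u w)"
proof -
  obtain v k where xv: "x = (v, k)" by force
  have m: "0 < m" using x by simp
  have k: "k mod m = k" "k \<noteq> 0" using x xv by auto
  show ?thesis
  proof (cases u)
    case Nil
    then show ?thesis using xv k by (simp add: cons_letter_def gmult_def)
  next
    case (Cons y u')
    obtain v' j where y: "y = (v', j)" by force
    have u': "u' \<in> reduced_words I m" using u Cons by (simp add: reduced_words_Cons)
    show ?thesis
    proof (cases "v' = v")
      case False
      then show ?thesis using xv k Cons y by (simp add: cons_letter_def gmult_def)
    next
      case True
      have merge: "cons_letter m x (gmult m u w) = cons_letter m (v, k + j) (gmult m u' w)"
        using cons_letter_cons_letter[OF m gmult_reduced[OF u' w]] xv Cons y True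
        by (simp add: gmult_Cons)
      have "cons_letter m x u = (if (k + j) mod m = 0 then u' else (v, (k + j) mod m) # u')"
        using xv k Cons y True by (simp add: cons_letter_def)
      then show ?thesis
        by (simp add: merge gmult_Cons cons_letter_mod cons_letter_mod_eq_0)
    qed
  qed
qed

lemma gmult_assoc:
  assumes "a \<in> reduced_words I m" "b \<in> reduced_words I m" "c \<in> reduced_words I m"
  shows "gmult m (gmult m a b) c = gmult m a (gmult m b c)"
  using assms(1)
proof (induction a)
  case (Cons x a)
  have a: "a \<in> reduced_words I m" and x: "fst x \<in> I" "0 < snd x" "snd x < m"
    using Cons.prems by (auto simp: reduced_words_Cons)
  have "gmult m (gmult m (x # a) b) c = cons_letter m x (gmult m (gmult m a b) c)"
    using gmult_cons_letter[OF gmult_reduced[OF a assms(2)] assms(3) x] by (simp add: gmult_Cons)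
  then show ?case using Cons.IH[OF a] by (simp add: gmult_Cons)
qed (simp add: gmult_Nil)

lemma gmult_Nil_right: "a \<in> reduced_words I m \<Longrightarrow> gmult m a [] = a"
proof (induction a)
  case (Cons x a)
  then show ?case
    by (cases a; cases x) (auto simp: gmult_Cons cons_letter_def reduced_words_Cons)
qed (simp add: gmult_Nil)

lemma ginv_Cons: "ginv m (x # a) = ginv m a @ [(fst x, m - snd x)]"
  by (cases x) (simp add: ginv_def)

lemma ginv_reduced_iff: "ginv m w \<in> reduced_words I m \<longleftrightarrow> w \<in> reduced_words I m"
proof
  assume "ginv m w \<in> reduced_words I m"
  then show "w \<in> reduced_words I m"
    unfolding reduced_words_def ginv_def
    by (auto simp: successively_map case_prod_beta elim!: successively_mono)
qed (auto simp: ginv_def reduced_words_def successively_map case_prod_beta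
      elim!: successively_mono)

lemma ginv_ginv: "a \<in> reduced_words I m \<Longrightarrow> ginv m (ginv m a) = a"
  by (auto simp: ginv_def reduced_words_def rev_map intro!: map_idI)

lemma gmult_ginv_left: "a \<in> reduced_words I m \<Longrightarrow> gmult m (ginv m a) a = []"
proof (induction a)
  case (Cons x a)
  obtain v k where xv: "x = (v, k)" by force
  have a: "a \<in> reduced_words I m" and k: "0 < k" "k < m"
    using Cons.prems xv by (auto simp: reduced_words_Cons)
  have "cons_letter m (v, m - k) (x # a) = a" using xv k by (simp add: cons_letter_def)
  then show ?case using Cons.IH[OF a] xv
    by (simp add: ginv_Cons gmult_append gmult_Cons gmult_Nil)
qed (simp add: ginv_def gmult_Nil)

lemma gmult_ginv_right: "a \<in> reduced_words I m \<Longrightarrow> gmult m a (ginv m a) = []"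
  using gmult_ginv_left[of "ginv m a" I m] ginv_ginv[of a I m] ginv_reduced_iff[of m a I]
  by simp

lemma ginv_gmult:
  assumes a: "a \<in> reduced_words I m" and b: "b \<in> reduced_words I m"
  shows "ginv m (gmult m a b) = gmult m (ginv m b) (ginv m a)"
proof -
  define g where "g = gmult m a b"
  define h where "h = gmult m (ginv m b) (ginv m a)"
  have ia: "ginv m a \<in> reduced_words I m" and ib: "ginv m b \<in> reduced_words I m"
    using a b by (simp_all add: ginv_reduced_iff)
  have g: "g \<in> reduced_words I m" and h: "h \<in> reduced_words I m"
    unfolding g_def h_def using gmult_reduced a b ia ib by blast+
  have ig: "ginv m g \<in> reduced_words I m" using g by (simp add: ginv_reduced_iff)
  have "gmult m g h = gmult m a (gmult m (gmult m b (ginv m b)) (ginv m a))"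
    unfolding g_def h_def using gmult_assoc[OF a b h[unfolded h_def]] gmult_assoc[OF b ib ia]
    by simp
  then have gh: "gmult m g h = []"
    by (simp add: gmult_ginv_right[OF a] gmult_ginv_right[OF b] gmult_Nil)
  have "h = gmult m (gmult m (ginv m g) g) h" by (simp add: gmult_ginv_left[OF g] gmult_Nil)
  also have "\<dots> = ginv m g" by (simp add: gmult_assoc[OF ig g h] gh gmult_Nil_right[OF ig])
  finally show ?thesis using g_def h_def by simp
qed

lemma ga_carrier_zero: "ga_zero \<in> ga_carrier I m"
  by (simp add: ga_carrier_def ga_zero_def)

lemma ga_carrier_add:
  assumes "f \<in> ga_carrier I m" "g \<in> ga_carrier I m"
  shows "ga_add f g \<in> ga_carrier I m"
proof -
  have "{w. ga_add f g w \<noteq> 0} \<subseteq> {w. f w \<noteq> 0} \<union> {w. g w \<noteq> 0}" by (auto simp: ga_add_def)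
  then show ?thesis using assms unfolding ga_carrier_def
    by (auto intro: finite_subset simp: ga_add_def)
qed

lemma ga_carrier_smult: "f \<in> ga_carrier I m \<Longrightarrow> ga_smult c f \<in> ga_carrier I m"
  by (auto simp: ga_carrier_def ga_smult_def intro: finite_subset[of _ "{w. f w \<noteq> 0}"])

lemma ga_carrier_delta: "x \<in> reduced_words I m \<Longrightarrow> ga_delta x \<in> ga_carrier I m"
  by (auto simp: ga_carrier_def ga_delta_def intro: finite_subset[of _ "{x}"])

lemma ga_carrier_sum:
  "finite A \<Longrightarrow> (\<And>x. x \<in> A \<Longrightarrow> F x \<in> ga_carrier I m) \<Longrightarrow> ga_sum A F \<in> ga_carrier I m"
proof (induction A rule: finite_induct)
  case empty
  then show ?case using ga_carrier_zero by (simp add: ga_sum_def ga_zero_def)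
next
  case (insert x A)
  then have "ga_sum (insert x A) F = ga_add (F x) (ga_sum A F)"
    by (simp add: ga_sum_def ga_add_def fun_eq_iff)
  then show ?case using insert by (simp add: ga_carrier_add)
qed

lemma ga_mult_support:
  "{w. ga_mult m f g w \<noteq> 0} \<subseteq> (\<lambda>(a, b). gmult m a b) ` ({a. f a \<noteq> 0} \<times> {b. g b \<noteq> 0})"
proof
  fix w assume w: "w \<in> {w. ga_mult m f g w \<noteq> 0}"
  let ?S = "{(a, b). f a \<noteq> 0 \<and> g b \<noteq> 0 \<and> gmult m a b = w}"
  have "?S \<noteq> {}"
  proof
    assume "?S = {}"
    then have "ga_mult m f g w = 0" unfolding ga_mult_def \<open>?S = {}\<close> by (simp only: sum.empty)
    then show False using w by simp
  qed
  then show "w \<in> (\<lambda>(a, b). gmult m a b) ` ({a. f a \<noteq> 0} \<times> {b. g b \<noteq> 0})"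
    by force
qed

lemma ga_carrier_mult:
  assumes f: "f \<in> ga_carrier I m" and g: "g \<in> ga_carrier I m"
  shows "ga_mult m f g \<in> ga_carrier I m"
proof -
  have "finite ((\<lambda>(a, b). gmult m a b) ` ({a. f a \<noteq> 0} \<times> {b. g b \<noteq> 0}))"
    using f g unfolding ga_carrier_def by auto
  moreover have "(\<lambda>(a, b). gmult m a b) ` ({a. f a \<noteq> 0} \<times> {b. g b \<noteq> 0}) \<subseteq> reduced_words I m"
    using f g unfolding ga_carrier_def by (auto intro: gmult_reduced)
  ultimately have "finite {w. ga_mult m f g w \<noteq> 0}" "{w. ga_mult m f g w \<noteq> 0} \<subseteq> reduced_words I m"
    using ga_mult_support[of m f g] by (auto intro: finite_subset)
  then show ?thesis by (auto simp: ga_carrier_def)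
qed

lemma ga_carrier_pow: "f \<in> ga_carrier I m \<Longrightarrow> ga_pow m f k \<in> ga_carrier I m"
  by (induction k) (auto simp: ga_one_def ga_carrier_delta ga_carrier_mult)

lemma ga_carrier_star:
  assumes f: "f \<in> ga_carrier I m"
  shows "ga_star m f \<in> ga_carrier I m"
proof -
  have "{w. ga_star m f w \<noteq> 0} \<subseteq> ginv m ` {w. f w \<noteq> 0}"
  proof
    fix w assume "w \<in> {w. ga_star m f w \<noteq> 0}"
    then have w: "f (ginv m w) \<noteq> 0" by (simp add: ga_star_def)
    then have "ginv m w \<in> reduced_words I m" using f by (simp add: ga_carrier_def)
    then have "ginv m (ginv m w) = w" by (simp add: ginv_reduced_iff ginv_ginv)
    then show "w \<in> ginv m ` {w. f w \<noteq> 0}" using w by force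
  qed
  moreover have "w \<in> reduced_words I m" if "ga_star m f w \<noteq> 0" for w
    using f that by (auto simp: ga_carrier_def ga_star_def ginv_reduced_iff)
  ultimately show ?thesis
    using f finite_subset unfolding ga_carrier_def by blast
qed

lemma ga_star_add: "ga_star m (ga_add x y) = ga_add (ga_star m x) (ga_star m y)"
  by (simp add: ga_star_def ga_add_def fun_eq_iff)

lemma ga_star_zero: "ga_star m ga_zero = ga_zero"
  by (simp add: ga_star_def ga_zero_def fun_eq_iff)

lemma ga_star_star: "f \<in> ga_carrier I m \<Longrightarrow> ga_star m (ga_star m f) = f"
proof
  fix w assume f: "f \<in> ga_carrier I m"
  show "ga_star m (ga_star m f) w = f w"
  proof (cases "w \<in> reduced_words I m")
    case True
    then show ?thesis by (simp add: ga_star_def ginv_ginv)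
  next
    case False
    then have "f w = 0" "f (ginv m (ginv m w)) = 0"
      using f by (auto simp: ga_carrier_def ginv_reduced_iff)
    then show ?thesis by (simp add: ga_star_def)
  qed
qed

text \<open>Pairs (a, b) with ab = w^{-1} correspond to pairs (b^{-1}, a^{-1}) with b^{-1} a^{-1} = w.\<close>

lemma ga_star_mult:
  assumes f: "f \<in> ga_carrier I m" and g: "g \<in> ga_carrier I m"
  shows "ga_star m (ga_mult m g f) = ga_mult m (ga_star m f) (ga_star m g)"
proof
  fix w
  define S1 where "S1 = {(a, b). g a \<noteq> 0 \<and> f b \<noteq> 0 \<and> gmult m a b = ginv m w}"
  define S2 where
    "S2 = {(c, d). cnj (f (ginv m c)) \<noteq> 0 \<and> cnj (g (ginv m d)) \<noteq> 0 \<and> gmult m c d = w}"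
  have red: "ginv m x \<in> reduced_words I m \<and> x \<in> reduced_words I m" if "f x \<noteq> 0 \<or> g x \<noteq> 0" for x
    using that f g by (auto simp: ga_carrier_def ginv_reduced_iff)
  have "(\<Sum>(c, d)\<in>S2. cnj (f (ginv m c)) * cnj (g (ginv m d))) = (\<Sum>(a, b)\<in>S1. cnj (g a * f b))"
  proof (rule sum.reindex_bij_witness[where j = "\<lambda>(c, d). (ginv m d, ginv m c)"
        and i = "\<lambda>(a, b). (ginv m b, ginv m a)"])
    fix p assume "p \<in> S2"
    then obtain c d where p: "p = (c, d)" "f (ginv m c) \<noteq> 0" "g (ginv m d) \<noteq> 0" "gmult m c d = w"
      by (auto simp: S2_def)
    then have "c \<in> reduced_words I m" "d \<in> reduced_words I m"
      using red ginv_reduced_iff by blast+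
    then show "(case (case p of (c, d) \<Rightarrow> (ginv m d, ginv m c)) of (a, b) \<Rightarrow> (ginv m b, ginv m a)) = p"
      and "(case p of (c, d) \<Rightarrow> (ginv m d, ginv m c)) \<in> S1"
      using p by (auto simp: S1_def ginv_ginv ginv_gmult)
  next
    fix p assume "p \<in> S1"
    then obtain a b where p: "p = (a, b)" "g a \<noteq> 0" "f b \<noteq> 0" "gmult m a b = ginv m w"
      by (auto simp: S1_def)
    then have a: "a \<in> reduced_words I m" and b: "b \<in> reduced_words I m" using red by blast+
    then have "ginv m w \<in> reduced_words I m" using p(4) gmult_reduced[OF a b] by simp
    then have "w = ginv m (gmult m a b)" using p(4) by (simp add: ginv_reduced_iff ginv_ginv)
    then have "w = gmult m (ginv m b) (ginv m a)" using ginv_gmult[OF a b] by simp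
    then show "(case (case p of (a, b) \<Rightarrow> (ginv m b, ginv m a)) of (c, d) \<Rightarrow> (ginv m d, ginv m c)) = p"
      and "(case p of (a, b) \<Rightarrow> (ginv m b, ginv m a)) \<in> S2"
      using p a b by (auto simp: S2_def ginv_ginv)
  qed (simp add: split_beta mult.commute)
  then show "ga_star m (ga_mult m g f) w = ga_mult m (ga_star m f) (ga_star m g) w"
    by (simp add: ga_star_def ga_mult_def S1_def S2_def cnj_sum case_prod_beta)
qed

lemma self_adjoint_add:
  "self_adjoint I m x \<Longrightarrow> self_adjoint I m y \<Longrightarrow> self_adjoint I m (ga_add x y)"
  unfolding self_adjoint_def by (simp add: ga_carrier_add ga_star_add)

lemma ga_cone_self_adjoint: "p \<in> ga_cone I m \<Longrightarrow> self_adjoint I m p"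
proof (induction rule: ga_cone.induct)
  case zero
  then show ?case by (simp add: self_adjoint_def ga_carrier_zero ga_star_zero)
next
  case (step f p)
  have "self_adjoint I m (ga_mult m (ga_star m f) f)"
    using step.hyps ga_star_mult[OF step.hyps(1) ga_carrier_star[OF step.hyps(1)]] ga_star_star[OF step.hyps(1)]
    by (simp add: self_adjoint_def ga_carrier_mult ga_carrier_star)
  then show ?case using step.IH by (rule self_adjoint_add)
qed

lemma ga_le_zero_iff: "ga_le I m ga_zero f \<longleftrightarrow> f \<in> ga_cone I m"
proof -
  have "ga_add f (ga_smult (-1) ga_zero) = f" by (simp add: ga_add_def ga_smult_def ga_zero_def)
  then show ?thesis by (simp add: ga_le_def)
qed

lemma ga_le_add_iff: "ga_le I m p (ga_add p q) \<longleftrightarrow> q \<in> ga_cone I m"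
proof -
  have "ga_add (ga_add p q) (ga_smult (-1) p) = q" by (simp add: ga_add_def ga_smult_def fun_eq_iff)
  then show ?thesis by (simp add: ga_le_def)
qed

locale ga_subspace =
  fixes J :: "'i ga set"
  assumes zero_mem: "ga_zero \<in> J"
    and add_mem: "x \<in> J \<Longrightarrow> y \<in> J \<Longrightarrow> ga_add x y \<in> J"
    and smult_mem: "x \<in> J \<Longrightarrow> ga_smult c x \<in> J"
begin

lemma mem_coset_self: "x \<in> ga_coset J x"
  unfolding ga_coset_def using zero_mem by (force simp: ga_add_def ga_zero_def)

lemma coset_zero: "ga_coset J ga_zero = J"
  unfolding ga_coset_def by (auto simp: ga_add_def ga_zero_def)

lemma coset_eq_coset:
  assumes "ga_add x (ga_smult (-1) x') \<in> J"
  shows "ga_coset J x = ga_coset J x'"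
proof -
  define d where "d = ga_add x (ga_smult (-1) x')"
  have d: "d \<in> J" "ga_smult (-1) d \<in> J" using assms smult_mem by (simp_all add: d_def)
  have shift: "ga_add x y = ga_add x' (ga_add d y)" "ga_add x' y = ga_add x (ga_add (ga_smult (-1) d) y)"
    for y by (simp_all add: d_def ga_add_def ga_smult_def fun_eq_iff)
  show ?thesis
  proof (intro set_eqI iffI)
    fix z assume "z \<in> ga_coset J x"
    then obtain y where "y \<in> J" "z = ga_add x y" by (auto simp: ga_coset_def)
    then show "z \<in> ga_coset J x'"
      unfolding ga_coset_def shift(1) using add_mem[OF d(1)] by blast
  next
    fix z assume "z \<in> ga_coset J x'"
    then obtain y where "y \<in> J" "z = ga_add x' y" by (auto simp: ga_coset_def)
    then show "z \<in> ga_coset J x"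
      unfolding ga_coset_def shift(2) using add_mem[OF d(2)] by blast
  qed
qed

lemma coset_eq_zero_iff: "ga_coset J x = ga_coset J ga_zero \<longleftrightarrow> x \<in> J"
proof
  assume "ga_coset J x = ga_coset J ga_zero"
  then show "x \<in> J" using mem_coset_self coset_zero by auto
next
  assume "x \<in> J"
  moreover have "ga_add x (ga_smult (-1) ga_zero) = x" by (simp add: ga_add_def ga_smult_def ga_zero_def)
  ultimately show "ga_coset J x = ga_coset J ga_zero" by (simp add: coset_eq_coset)
qed

lemma uminus_image_coset: "(\<lambda>z. ga_smult (-1) z) ` ga_coset J q = ga_coset J (ga_smult (-1) q)"
proof -
  have neg: "ga_smult (-1) (ga_add q y) = ga_add (ga_smult (-1) q) (ga_smult (-1) y)"
    "ga_add (ga_smult (-1) q) y = ga_smult (-1) (ga_add q (ga_smult (-1) y))" for y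
    by (simp_all add: ga_add_def ga_smult_def fun_eq_iff)
  show ?thesis
  proof (intro set_eqI iffI)
    fix z assume "z \<in> (\<lambda>z. ga_smult (-1) z) ` ga_coset J q"
    then obtain y where "y \<in> J" "z = ga_smult (-1) (ga_add q y)" by (auto simp: ga_coset_def)
    then show "z \<in> ga_coset J (ga_smult (-1) q)"
      unfolding ga_coset_def neg(1) using smult_mem by blast
  next
    fix z assume "z \<in> ga_coset J (ga_smult (-1) q)"
    then obtain y where "y \<in> J" "z = ga_smult (-1) (ga_add q (ga_smult (-1) y))"
      by (auto simp: ga_coset_def neg(2))
    then show "z \<in> (\<lambda>z. ga_smult (-1) z) ` ga_coset J q"
      unfolding ga_coset_def using smult_mem by blast
  qed
qed

lemma mem_quot_pos_inter_neg_iff: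
  "C \<in> quot_pos I m J \<inter> quot_neg (quot_pos I m J) \<longleftrightarrow>
     (\<exists>p q. p \<in> ga_cone I m \<and> q \<in> ga_cone I m \<and> ga_add p q \<in> J \<and> C = ga_coset J p)"
proof -
  have coset_eq_neg: "ga_coset J p = ga_coset J (ga_smult (-1) q) \<longleftrightarrow> ga_add p q \<in> J" for p q
  proof
    assume "ga_coset J p = ga_coset J (ga_smult (-1) q)"
    then obtain y where "y \<in> J" "p = ga_add (ga_smult (-1) q) y"
      using mem_coset_self[of p] by (auto simp: ga_coset_def)
    moreover have "ga_add (ga_add (ga_smult (-1) q) y) q = y"
      by (simp add: ga_add_def ga_smult_def fun_eq_iff)
    ultimately show "ga_add p q \<in> J" by simp
  next
    assume "ga_add p q \<in> J"
    moreover have "ga_add p (ga_smult (-1) (ga_smult (-1) q)) = ga_add p q"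
      by (simp add: ga_add_def ga_smult_def fun_eq_iff)
    ultimately show "ga_coset J p = ga_coset J (ga_smult (-1) q)" by (simp add: coset_eq_coset)
  qed
  have neg_iff: "C \<in> quot_neg (quot_pos I m J) \<longleftrightarrow> (\<exists>q. q \<in> ga_cone I m \<and> C = ga_coset J (ga_smult (-1) q))"
  proof -
    have "C \<in> quot_neg (quot_pos I m J) \<longleftrightarrow>
          (\<exists>q. q \<in> ga_cone I m \<and> C = (\<lambda>z. ga_smult (-1) z) ` ga_coset J q)"
      unfolding quot_pos_def quot_neg_def by blast
    then show ?thesis by (simp add: uminus_image_coset)
  qed
  show ?thesis
  proof
    assume "C \<in> quot_pos I m J \<inter> quot_neg (quot_pos I m J)"
    then obtain p q where "p \<in> ga_cone I m" "q \<in> ga_cone I m" "C = ga_coset J p"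
      "C = ga_coset J (ga_smult (-1) q)"
      using neg_iff by (auto simp: quot_pos_def)
    then show "\<exists>p q. p \<in> ga_cone I m \<and> q \<in> ga_cone I m \<and> ga_add p q \<in> J \<and> C = ga_coset J p"
      using coset_eq_neg by blast
  next
    assume "\<exists>p q. p \<in> ga_cone I m \<and> q \<in> ga_cone I m \<and> ga_add p q \<in> J \<and> C = ga_coset J p"
    then show "C \<in> quot_pos I m J \<inter> quot_neg (quot_pos I m J)"
      using neg_iff coset_eq_neg by (auto simp: quot_pos_def)
  qed
qed

lemma hereditary_imp_quot_pos_pointed:
  assumes "hereditary_subspace I m J"
  shows "quot_pos I m J \<inter> quot_neg (quot_pos I m J) = {ga_coset J ga_zero}"
proof -
  have in_J: "p \<in> J" if "p \<in> ga_cone I m" "q \<in> ga_cone I m" "ga_add p q \<in> J" for p q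
  proof -
    have "self_adjoint I m p" "self_adjoint I m (ga_add p q)"
      using that by (simp_all add: ga_cone_self_adjoint self_adjoint_add)
    moreover have "ga_le I m ga_zero p" "ga_le I m p (ga_add p q)"
      using that by (simp_all add: ga_le_zero_iff ga_le_add_iff)
    ultimately show "p \<in> J"
      using assms \<open>ga_add p q \<in> J\<close> unfolding hereditary_subspace_def by blast
  qed
  have "ga_add ga_zero ga_zero = (ga_zero :: 'i ga)" by (simp add: ga_add_def ga_zero_def)
  then have zero_witness:
    "\<exists>p q. p \<in> ga_cone I m \<and> q \<in> ga_cone I m \<and> ga_add p q \<in> J \<and> ga_coset J ga_zero = ga_coset J p"
    using zero_mem ga_cone.zero by metis
  show ?thesis
  proof (rule set_eqI)
    fix C
    show "C \<in> quot_pos I m J \<inter> quot_neg (quot_pos I m J) \<longleftrightarrow> C \<in> {ga_coset J ga_zero}"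
      unfolding mem_quot_pos_inter_neg_iff singleton_iff
      using in_J zero_witness coset_eq_zero_iff by metis
  qed
qed

lemma quot_pos_pointed_imp_hereditary:
  assumes "J \<subseteq> ga_carrier I m" and "\<And>x. x \<in> J \<Longrightarrow> ga_star m x \<in> J"
    and "quot_pos I m J \<inter> quot_neg (quot_pos I m J) = {ga_coset J ga_zero}"
  shows "hereditary_subspace I m J"
proof -
  have "f \<in> J" if "ga_le I m ga_zero f" "ga_le I m f h" "h \<in> J" for f h
  proof -
    define q where "q = ga_add h (ga_smult (-1) f)"
    have "ga_add f q = h" by (simp add: q_def ga_add_def ga_smult_def fun_eq_iff)
    moreover have "f \<in> ga_cone I m" using that(1) by (simp add: ga_le_zero_iff)
    moreover have "q \<in> ga_cone I m" using that(2) by (simp add: ga_le_def q_def)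
    ultimately have "ga_coset J f \<in> quot_pos I m J \<inter> quot_neg (quot_pos I m J)"
      unfolding mem_quot_pos_inter_neg_iff using \<open>h \<in> J\<close> by blast
    then show "f \<in> J" using assms(3) by (simp add: coset_eq_zero_iff)
  qed
  then show ?thesis
    using assms(1,2) zero_mem add_mem smult_mem unfolding hereditary_subspace_def by simp blast
qed

end

lemma ga_ideal_subspace: "ga_subspace (ga_ideal I m S)"
  by unfold_locales (auto intro: ga_ideal.intros)

lemma ga_ideal_subset_carrier:
  assumes "S \<subseteq> ga_carrier I m"
  shows "ga_ideal I m S \<subseteq> ga_carrier I m"
proof
  show "x \<in> ga_carrier I m" if "x \<in> ga_ideal I m S" for x
    using that assms
    by induction (auto intro: ga_carrier_zero ga_carrier_add ga_carrier_smult ga_carrier_mult ga_carrier_star)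
qed

lemma proj_e_carrier: "v \<in> I \<Longrightarrow> 0 < m \<Longrightarrow> proj_e m v a \<in> ga_carrier I m"
  unfolding proj_e_def gen_u_def
  by (intro ga_carrier_smult ga_carrier_sum ga_carrier_pow ga_carrier_delta cons_letter_reduced) auto

theorem mainTheorem11:
  fixes I :: "'i set" and m :: nat and lam :: "'i \<Rightarrow> 'i \<Rightarrow> nat \<Rightarrow> nat \<Rightarrow> bool"
  assumes "finite I" and "m \<ge> 1"
    and "\<forall>v\<in>I. \<forall>a<m. \<forall>b<m. lam v v a b \<longleftrightarrow> a = b"
  shows "hereditary_subspace I m (game_ideal I m lam) \<longleftrightarrow>
         quot_pos I m (game_ideal I m lam) \<inter> quot_neg (quot_pos I m (game_ideal I m lam))
           = {ga_coset (game_ideal I m lam) ga_zero}"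
proof -
  let ?J = "game_ideal I m lam"
  interpret ga_subspace ?J
    unfolding game_ideal_def by (rule ga_ideal_subspace)
  have carrier: "?J \<subseteq> ga_carrier I m"
    unfolding game_ideal_def using assms(2)
    by (intro ga_ideal_subset_carrier) (auto intro!: ga_carrier_mult proj_e_carrier)
  have star: "x \<in> ?J \<Longrightarrow> ga_star m x \<in> ?J" for x
    unfolding game_ideal_def by (rule ga_ideal.star)
  show ?thesis
    using hereditary_imp_quot_pos_pointed quot_pos_pointed_imp_hereditary[OF carrier star]
    by (intro iffI)
qed

end
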